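(* Let $\{\Delta_1,\dots,\Delta_r\}$ be a nef-partition of a reflexive polytope $\Delta$ with dual nef-partition $\{\nabla_1,\dots,\nabla_r\}$. Then $l(\Delta^* )=l(\nabla_1)+\dots+l(\nabla_r)-r+1$.
   Context: Let $M\cong\mathbb Z^d$, $N=\mathrm{Hom}(M,\mathbb Z)$. For a lattice polytope $\Theta$, $l(\Theta)$ is its number of lattice points. A $d$-dimensional lattice polytope $\Delta\subset M_{\mathbb R}$ is reflexive if $\Delta=\{x:\langle x,e_k\rangle\ge-1,\ k=1,\dots,n\}$ with $e_k\in N$ the primitive inward facet normals; $\Delta^*=\mathrm{Conv}(e_1,\dots,e_n)$. A nef-partition is a Minkowski decomposition $\Delta=\Delta_1+\dots+\Delta_r$ into lattice polytopes with $\varphi_j(e_k)\in\{0,1\}$ for all $j,k$, $\varphi_j(y)=-\min_{x\in\Delta_j}\langle x,y\rangle$; the dual nef-partition consists of $\nabla_j=\mathrm{Conv}(\{0\}\cup\{e_k:\varphi_j(e_k)=1\})\subset N_{\mathbb R}$. *)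

theory Defs
  imports "HOL-Analysis.Analysis"
begin

text \<open>Both M and N = Hom(M,Z) are modelled as the integer points of real^'d,
  the pairing being the standard inner product.\<close>

definition lattice_point :: "real ^ 'd \<Rightarrow> bool" where
  "lattice_point x \<longleftrightarrow> (\<forall>i. x $ i \<in> \<int>)"

definition primitive :: "real ^ 'd \<Rightarrow> bool" where
  "primitive e \<longleftrightarrow> lattice_point e \<and> e \<noteq> 0 \<and>
     (\<forall>m::int. m > 1 \<longrightarrow> \<not> lattice_point ((1 / real_of_int m) *\<^sub>R e))"

definition lpts :: "(real ^ 'd) set \<Rightarrow> nat" where
  "lpts P = card {x \<in> P. lattice_point x}"

definition lattice_polytope :: "(real ^ 'd) set \<Rightarrow> bool" where
  "lattice_polytope P \<longleftrightarrow> (\<exists>V. finite V \<and> (\<forall>v\<in>V. lattice_point v) \<and> P = convex hull V)"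

definition reflexive_with_normals :: "(real ^ 'd) set \<Rightarrow> (real ^ 'd) set \<Rightarrow> bool" where
  "reflexive_with_normals \<Delta> E \<longleftrightarrow>
     lattice_polytope \<Delta> \<and> aff_dim \<Delta> = int CARD('d) \<and> finite E \<and>
     (\<forall>e\<in>E. primitive e \<and> {x \<in> \<Delta>. x \<bullet> e = -1} facet_of \<Delta>) \<and>
     \<Delta> = {x. \<forall>e\<in>E. x \<bullet> e \<ge> -1}"

definition supp_phi :: "(real ^ 'd) set \<Rightarrow> real ^ 'd \<Rightarrow> real" where
  "supp_phi P y = - Inf ((\<lambda>x. x \<bullet> y) ` P)"

definition minkowski_sum :: "nat \<Rightarrow> (nat \<Rightarrow> (real ^ 'd) set) \<Rightarrow> (real ^ 'd) set" where
  "minkowski_sum r D = {\<Sum>j<r. x j | x. \<forall>j<r. x j \<in> D j}"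

definition nef_partition ::
  "(real ^ 'd) set \<Rightarrow> (real ^ 'd) set \<Rightarrow> nat \<Rightarrow> (nat \<Rightarrow> (real ^ 'd) set) \<Rightarrow> bool" where
  "nef_partition \<Delta> E r D \<longleftrightarrow>
     (\<forall>j<r. lattice_polytope (D j)) \<and> \<Delta> = minkowski_sum r D \<and>
     (\<forall>j<r. \<forall>e\<in>E. supp_phi (D j) e \<in> {0, 1})"

definition dual_nef_part :: "(real ^ 'd) set \<Rightarrow> (real ^ 'd) set \<Rightarrow> (real ^ 'd) set" where
  "dual_nef_part E Dj = convex hull (insert 0 {e \<in> E. supp_phi Dj e = 1})"

end

(*
  Write phi_j for the support function of Delta_j; then phi = phi_1 + ... + phi_r is the
  support function of Delta, and phi(e) = 1 for every facet normal e.  If z minimises <-, y>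
  on Delta, then y lies in the cone spanned by the normals active at z (Farkas), and the
  summands of z minimise all of these normals at once.  Hence y = sum mu_e e with mu_e > 0
  and phi_j(y) = sum mu_e phi_j(e) for every j; in particular every phi_j is nonnegative.
  For a nonzero lattice point y of conv E the phi_j(y) are nonnegative integers with
  0 < phi(y) <= 1, so exactly one of them, phi_j(y), equals 1.  Then phi_j(e) = 1 for all
  e in the support of mu and sum mu_e = 1, so y lies in nabla_j.  Conversely, a common
  point of nabla_i and nabla_j (i <> j) is nonnegative on every summand of Delta, hence on
  Delta, hence it is 0.  Thus the nonzero lattice points of conv E are partitioned by the
  sets of nonzero lattice points of the nabla_j.
*)

theory Submission
  imports Defs
begin

lemma finite_lattice_points:
  fixes S :: "(real ^ 'd) set"
  assumes "bounded S"
  shows "finite {x \<in> S. lattice_point x}"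
proof -
  obtain B where B: "\<And>x. x \<in> S \<Longrightarrow> norm x \<le> B" using assms bounded_iff by blast
  define K where "K = \<lceil>B\<rceil>"
  let ?vec = "\<lambda>f. \<chi> i. real_of_int (f i)"
  have "{x \<in> S. lattice_point x} \<subseteq> ?vec ` (\<Pi>\<^sub>E i\<in>UNIV. {-K..K})"
  proof
    fix x assume "x \<in> {x \<in> S. lattice_point x}"
    then have x: "x \<in> S" "lattice_point x" by auto
    define f where "f = (\<lambda>i. \<lfloor>x $ i\<rfloor>)"
    have xi: "x $ i = real_of_int (f i)" for i
      using x unfolding lattice_point_def f_def by (auto elim!: Ints_cases)
    have bound: "real_of_int \<bar>f i\<bar> \<le> real_of_int K" for i
      using B[OF x(1)] component_le_norm_cart[of x i] le_of_int_ceiling[of B]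
      unfolding K_def xi of_int_abs by linarith
    have "f i \<in> {-K..K}" for i
      using bound[of i] unfolding of_int_le_iff by (simp add: abs_le_iff)
    moreover have "x = ?vec f" using xi by (simp add: vec_eq_iff)
    ultimately show "x \<in> ?vec ` (\<Pi>\<^sub>E i\<in>UNIV. {-K..K})" by blast
  qed
  moreover have "finite (\<Pi>\<^sub>E i\<in>(UNIV::'d set). {-K..K})" by (intro finite_PiE) auto
  ultimately show ?thesis by (meson finite_imageI finite_subset)
qed

lemma lattice_point_zero [simp]: "lattice_point 0"
  by (simp add: lattice_point_def)

lemma lattice_point_inner_Ints:
  "lattice_point (x::real^'d) \<Longrightarrow> lattice_point y \<Longrightarrow> x \<bullet> y \<in> \<int>"
  unfolding lattice_point_def inner_vec_def by (auto intro!: Ints_sum Ints_mult)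

lemma supp_phi_convex_hull:
  fixes V :: "(real ^ 'd) set"
  assumes "finite V" "V \<noteq> {}"
  shows "\<exists>v\<in>V. (\<forall>x\<in>convex hull V. v \<bullet> y \<le> x \<bullet> y) \<and>
           supp_phi (convex hull V) y = - (v \<bullet> y)"
proof -
  have "Min ((\<lambda>w. w \<bullet> y) ` V) \<in> (\<lambda>w. w \<bullet> y) ` V"
    using assms by (intro Min_in) auto
  then obtain v where v: "v \<in> V" "v \<bullet> y = Min ((\<lambda>w. w \<bullet> y) ` V)"
    by auto
  then have "\<forall>w\<in>V. v \<bullet> y \<le> w \<bullet> y"
    using assms by auto
  then have "V \<subseteq> {x. y \<bullet> x \<ge> v \<bullet> y}"
    by (auto simp: inner_commute)
  then have min: "convex hull V \<subseteq> {x. y \<bullet> x \<ge> v \<bullet> y}"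
    by (intro hull_minimal convex_halfspace_ge)
  have "Inf ((\<lambda>x. x \<bullet> y) ` (convex hull V)) = v \<bullet> y"
    using min v(1) by (intro cInf_eq_minimum) (auto simp: hull_inc inner_commute)
  then show ?thesis
    using v(1) min by (auto simp: supp_phi_def inner_commute)
qed

lemma
  assumes "lattice_polytope P"
  shows supp_phi_le_inner: "x \<in> P \<Longrightarrow> - supp_phi P y \<le> x \<bullet> y"
    and supp_phi_attained: "P \<noteq> {} \<Longrightarrow> \<exists>x\<in>P. x \<bullet> y = - supp_phi P y"
    and supp_phi_Ints: "P \<noteq> {} \<Longrightarrow> lattice_point y \<Longrightarrow> supp_phi P y \<in> \<int>"
proof -
  obtain V where V: "finite V" "\<forall>v\<in>V. lattice_point v" "P = convex hull V"
    using assms unfolding lattice_polytope_def by blast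
  show "- supp_phi P y \<le> x \<bullet> y" if "x \<in> P"
  proof -
    have "V \<noteq> {}" using that V(3) by auto
    then obtain v where "\<forall>x\<in>convex hull V. v \<bullet> y \<le> x \<bullet> y"
      "supp_phi (convex hull V) y = - (v \<bullet> y)"
      using supp_phi_convex_hull[OF V(1)] by blast
    then show ?thesis using that V(3) by auto
  qed
  assume "P \<noteq> {}"
  then have "V \<noteq> {}" using V(3) by auto
  then obtain v where "v \<in> V" "supp_phi P y = - (v \<bullet> y)"
    using supp_phi_convex_hull[OF V(1)] V(3) by blast
  moreover have "v \<in> P" using \<open>v \<in> V\<close> V(3) by (simp add: hull_inc)
  ultimately show "\<exists>x\<in>P. x \<bullet> y = - supp_phi P y"
    and "lattice_point y \<Longrightarrow> supp_phi P y \<in> \<int>"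
    using V(2) lattice_point_inner_Ints by auto
qed

lemma mem_minkowski_sum:
  "x \<in> minkowski_sum r D \<longleftrightarrow> (\<exists>f. (\<forall>j<r. f j \<in> D j) \<and> x = (\<Sum>j<r. f j))"
  unfolding minkowski_sum_def by blast

lemma supp_phi_minkowski_sum:
  assumes "\<And>j. j < r \<Longrightarrow> lattice_polytope (D j)" "\<And>j. j < r \<Longrightarrow> D j \<noteq> {}"
  shows "supp_phi (minkowski_sum r D) y = (\<Sum>j<r. supp_phi (D j) y)"
proof -
  have lower: "- (\<Sum>j<r. supp_phi (D j) y) \<le> x \<bullet> y" if x: "x \<in> minkowski_sum r D" for x
  proof -
    obtain f where f: "\<forall>j<r. f j \<in> D j" "x = (\<Sum>j<r. f j)"
      using x unfolding mem_minkowski_sum by blast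
    have "- (\<Sum>j<r. supp_phi (D j) y) = (\<Sum>j<r. - supp_phi (D j) y)"
      by (simp add: sum_negf)
    also have "\<dots> \<le> (\<Sum>j<r. f j \<bullet> y)"
      using f(1) assms(1) by (intro sum_mono supp_phi_le_inner) auto
    also have "\<dots> = x \<bullet> y"
      by (simp add: f(2) inner_sum_left)
    finally show ?thesis .
  qed
  have "\<forall>j\<in>{..<r}. \<exists>m. m \<in> D j \<and> m \<bullet> y = - supp_phi (D j) y"
    using supp_phi_attained[OF assms] by blast
  from bchoice[OF this]
  obtain m where m: "\<forall>j\<in>{..<r}. m j \<in> D j \<and> m j \<bullet> y = - supp_phi (D j) y"
    by blast
  have sum_m: "(\<Sum>j<r. m j) \<in> minkowski_sum r D"
    using m by (auto simp: mem_minkowski_sum)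
  have val: "(\<Sum>j<r. m j) \<bullet> y = - (\<Sum>j<r. supp_phi (D j) y)"
    using m by (simp add: inner_sum_left flip: sum_negf)
  have "Inf ((\<lambda>x. x \<bullet> y) ` minkowski_sum r D) = (\<Sum>j<r. m j) \<bullet> y"
  proof (rule cInf_eq_minimum)
    show "(\<Sum>j<r. m j) \<bullet> y \<in> (\<lambda>x. x \<bullet> y) ` minkowski_sum r D"
      using sum_m by (rule imageI)
    show "(\<Sum>j<r. m j) \<bullet> y \<le> z" if "z \<in> (\<lambda>x. x \<bullet> y) ` minkowski_sum r D" for z
      using that lower unfolding val by blast
  qed
  then show ?thesis
    by (simp add: supp_phi_def val)
qed

lemma minkowski_sum_minimizer_summands:
  fixes r :: nat
  assumes "\<And>j. j < r \<Longrightarrow> lattice_polytope (D j)" "\<And>j. j < r \<Longrightarrow> f j \<in> D j"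
    and "(\<Sum>j<r. f j) \<bullet> y = - (\<Sum>j<r. supp_phi (D j) y)" and "j < r"
  shows "f j \<bullet> y = - supp_phi (D j) y"
proof -
  have eq: "(\<Sum>j<r. - supp_phi (D j) y) = (\<Sum>j<r. f j \<bullet> y)"
    using assms(3) by (simp add: inner_sum_left sum_negf)
  have le: "- supp_phi (D i) y \<le> f i \<bullet> y" if "i \<in> {..<r}" for i
    using that assms(1,2) by (simp add: supp_phi_le_inner)
  have "- supp_phi (D j) y = f j \<bullet> y"
    using sum_mono_inv[OF eq le] assms(4) by simp
  then show ?thesis
    by simp
qed

lemma nonneg_on_polyhedron_imp_zero:
  fixes E :: "'a::real_inner set"
  assumes "finite E" and nonneg: "\<And>x. \<forall>e\<in>E. -1 \<le> x \<bullet> e \<Longrightarrow> 0 \<le> x \<bullet> y"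
  shows "y = 0"
proof -
  define s where "s = (\<Sum>e\<in>E. \<bar>y \<bullet> e\<bar>)"
  have "s \<ge> 0" unfolding s_def by (simp add: sum_nonneg)
  define \<epsilon> where "\<epsilon> = 1 / (1 + s)"
  have \<epsilon>: "\<epsilon> > 0" "\<epsilon> * s \<le> 1"
    using \<open>s \<ge> 0\<close> by (simp_all add: \<epsilon>_def)
  have "\<epsilon> * (y \<bullet> e) \<le> 1" if "e \<in> E" for e
  proof -
    have "\<bar>y \<bullet> e\<bar> \<le> s" unfolding s_def using assms(1) that by (intro member_le_sum) auto
    then have "\<epsilon> * (y \<bullet> e) \<le> \<epsilon> * s"
      using mult_left_mono[OF abs_le_D1 less_imp_le[OF \<epsilon>(1)]] by blast
    then show ?thesis using \<epsilon>(2) by linarith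
  qed
  then have "0 \<le> (- \<epsilon> *\<^sub>R y) \<bullet> y"
    by (intro nonneg) simp
  then have "y \<bullet> y \<le> 0"
    using \<epsilon> by (simp add: mult_le_0_iff)
  then have "y \<bullet> y = 0"
    using inner_ge_zero[of y] by linarith
  then show ?thesis
    by simp
qed

lemma bounded_polyhedron_imp_zero_in_convex_hull:
  fixes E :: "'a::euclidean_space set"
  assumes "finite E" and bdd: "bounded {x. \<forall>e\<in>E. -1 \<le> x \<bullet> e}"
  shows "0 \<in> convex hull E"
proof (rule ccontr)
  assume "0 \<notin> convex hull E"
  moreover have "closed (convex hull E)"
    using assms(1) by (simp add: compact_imp_closed compact_convex_hull finite_imp_compact)
  ultimately obtain a b where ab: "a \<bullet> 0 < b" "\<forall>x\<in>convex hull E. b < a \<bullet> x"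
    using separating_hyperplane_closed_point[OF convex_convex_hull] by blast
  then have pos: "0 < a \<bullet> e" if "e \<in> E" for e
    using that by (smt (verit) hull_inc inner_zero_right)
  have "E \<noteq> {}"
  proof
    assume "E = {}"
    then show False using bdd not_bounded_UNIV by simp
  qed
  then have "a \<noteq> 0"
    using pos by force
  have ray: "t *\<^sub>R a \<in> {x. \<forall>e\<in>E. -1 \<le> x \<bullet> e}" if "t \<ge> 0" for t
  proof -
    have "0 \<le> (t *\<^sub>R a) \<bullet> e" if "e \<in> E" for e
      using pos[OF that] \<open>t \<ge> 0\<close> by simp
    then show ?thesis by force
  qed
  obtain B where B: "\<forall>x\<in>{x. \<forall>e\<in>E. -1 \<le> x \<bullet> e}. norm x \<le> B"
    using bdd unfolding bounded_iff by blast
  define t where "t = (\<bar>B\<bar> + 1) / norm a"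
  have "t \<ge> 0" unfolding t_def by simp
  then have "norm (t *\<^sub>R a) \<le> B"
    using B ray by blast
  moreover have "norm (t *\<^sub>R a) = \<bar>B\<bar> + 1"
    using \<open>a \<noteq> 0\<close> \<open>t \<ge> 0\<close> unfolding norm_scaleR by (simp add: t_def)
  ultimately show False
    by linarith
qed

lemma convex_cone_hull_finite_sumE:
  fixes T :: "'a::real_vector set"
  assumes "finite T" "y \<in> convex_cone hull T"
  obtains \<mu> where "\<forall>e\<in>T. 0 \<le> \<mu> e" "y = (\<Sum>e\<in>T. \<mu> e *\<^sub>R e)"
proof -
  from assms(2) consider "y = 0" | c x where "c \<ge> 0" "x \<in> convex hull T" "y = c *\<^sub>R x"
    unfolding convex_cone_hull_convex_hull by blast
  then show thesis
  proof cases
    case 1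
    then show thesis
      using that[of "\<lambda>_. 0"] by simp
  next
    case 2
    then obtain u where "\<forall>e\<in>T. 0 \<le> u e" "x = (\<Sum>e\<in>T. u e *\<^sub>R e)"
      unfolding convex_hull_finite[OF assms(1)] by blast
    then show thesis
      using that[of "\<lambda>e. c * u e"] 2 by (simp add: scaleR_sum_right)
  qed
qed

lemma polyhedron_feasible_direction:
  fixes E :: "'a::real_inner set"
  assumes "finite E" and z: "\<forall>e\<in>E. -1 \<le> z \<bullet> e"
    and active: "\<And>e. e \<in> E \<Longrightarrow> z \<bullet> e = -1 \<Longrightarrow> 0 \<le> a \<bullet> e"
  shows "\<exists>t>0. \<forall>e\<in>E. -1 \<le> (z + t *\<^sub>R a) \<bullet> e"
proof -
  have "\<forall>\<^sub>F t in at_right 0. -1 \<le> (z + t *\<^sub>R a) \<bullet> e" if "e \<in> E" for e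
  proof (cases "z \<bullet> e = -1")
    case True
    then show ?thesis
      using active[OF that True]
      by (intro eventually_mono[OF eventually_at_right_less[of 0]]) (simp add: inner_add_left)
  next
    case False
    then have "-1 < z \<bullet> e + 0 * (a \<bullet> e)"
      using z that by force
    moreover have "((\<lambda>t. z \<bullet> e + t * (a \<bullet> e)) \<longlongrightarrow> z \<bullet> e + 0 * (a \<bullet> e)) (at_right 0)"
      by (intro tendsto_intros)
    ultimately have "\<forall>\<^sub>F t in at_right 0. -1 < z \<bullet> e + t * (a \<bullet> e)"
      by (rule order_tendstoD(1)[rotated])
    then show ?thesis
      by eventually_elim (simp add: inner_add_left)
  qed
  then have "\<forall>\<^sub>F t in at_right 0. 0 < t \<and> (\<forall>e\<in>E. -1 \<le> (z + t *\<^sub>R a) \<bullet> e)"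
    using assms(1) by (intro eventually_conj eventually_at_right_less eventually_ball_finite) auto
  then show ?thesis
    using eventually_happens trivial_limit_at_right_real by blast
qed

lemma minimized_direction_in_active_cone:
  fixes E :: "'a::euclidean_space set"
  assumes "finite E" and z: "\<forall>e\<in>E. -1 \<le> z \<bullet> e"
    and min: "\<And>x. \<forall>e\<in>E. -1 \<le> x \<bullet> e \<Longrightarrow> z \<bullet> y \<le> x \<bullet> y"
  shows "y \<in> convex_cone hull {e \<in> E. z \<bullet> e = -1}"
proof (rule ccontr)
  \<comment> \<open>A functional separating y from the cone is nonnegative on the active normals, so
    moving z a little along it stays feasible but decreases the objective.\<close>
  let ?C = "convex_cone hull {e \<in> E. z \<bullet> e = -1}"
  assume "y \<notin> ?C"
  moreover have "closed ?C"
    using assms(1) by (simp add: closed_convex_cone_hull)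
  ultimately obtain a b where ab: "a \<bullet> y < b" "\<forall>x\<in>?C. b < a \<bullet> x"
    using separating_hyperplane_closed_point[OF convex_convex_cone_hull] by blast
  then have "b < 0"
    using convex_cone_hull_contains_0 by fastforce
  have "0 \<le> a \<bullet> e" if "e \<in> E" "z \<bullet> e = -1" for e
  proof (rule ccontr)
    assume "\<not> 0 \<le> a \<bullet> e"
    then have "(b / (a \<bullet> e)) *\<^sub>R e \<in> ?C"
      using that \<open>b < 0\<close> by (intro convex_cone_hull_mul hull_inc) (auto simp: divide_nonpos_neg)
    then have "b < b / (a \<bullet> e) * (a \<bullet> e)"
      using ab(2) by fastforce
    with \<open>\<not> 0 \<le> a \<bullet> e\<close> show False
      by simp
  qed
  then obtain t where t: "t > 0" "\<forall>e\<in>E. -1 \<le> (z + t *\<^sub>R a) \<bullet> e"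
    using polyhedron_feasible_direction[OF assms(1) z] by blast
  then have "z \<bullet> y \<le> z \<bullet> y + t * (a \<bullet> y)"
    using min[OF t(2)] by (simp add: inner_add_left)
  moreover have "t * (a \<bullet> y) < 0"
    using t(1) ab(1) \<open>b < 0\<close> by (simp add: mult_pos_neg)
  ultimately show False
    by linarith
qed

lemma card_insert_UN_pointed:
  assumes "finite I" "\<And>i. i \<in> I \<Longrightarrow> finite (A i)" "\<And>i. i \<in> I \<Longrightarrow> a \<in> A i"
    and "\<And>i j. i \<in> I \<Longrightarrow> j \<in> I \<Longrightarrow> i \<noteq> j \<Longrightarrow> A i \<inter> A j \<subseteq> {a}"
  shows "int (card (insert a (\<Union>i\<in>I. A i))) = (\<Sum>i\<in>I. int (card (A i))) - int (card I) + 1"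
proof -
  let ?B = "\<lambda>i. A i - {a}"
  have "card (insert a (\<Union>i\<in>I. A i)) = Suc (card ((\<Union>i\<in>I. A i) - {a}))"
    using assms(1,2) by (intro card.insert_remove) blast
  also have "(\<Union>i\<in>I. A i) - {a} = (\<Union>i\<in>I. ?B i)"
    by blast
  also have "card (\<Union>i\<in>I. ?B i) = (\<Sum>i\<in>I. card (?B i))"
    by (rule card_UN_disjoint) (use assms in blast)+
  finally have "int (card (insert a (\<Union>i\<in>I. A i))) = (\<Sum>i\<in>I. int (card (?B i))) + 1"
    by simp
  also have "\<dots> = (\<Sum>i\<in>I. int (card (A i)) - 1) + 1"
  proof (intro arg_cong[where f = "\<lambda>s. s + 1"] sum.cong refl)
    fix i assume "i \<in> I"
    then have "0 < card (A i)"
      using assms(2,3) card_gt_0_iff by blast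
    then show "int (card (?B i)) = int (card (A i)) - 1"
      using assms(2,3) \<open>i \<in> I\<close> by (simp add: of_nat_diff)
  qed
  finally show ?thesis
    by (simp add: sum_subtractf)
qed

lemma sum_nonneg_two_le:
  fixes f :: "'a \<Rightarrow> 'b::ordered_comm_monoid_add"
  assumes "finite I" "\<And>k. k \<in> I \<Longrightarrow> 0 \<le> f k" "i \<in> I" "j \<in> I" "i \<noteq> j"
  shows "f i + f j \<le> sum f I"
  using sum_mono2[of I "{i, j}" f] assms by simp

locale reflexive_nef_partition =
  fixes \<Delta> E :: "(real ^ 'd) set" and r :: nat and D :: "nat \<Rightarrow> (real ^ 'd) set"
  assumes reflexive: "reflexive_with_normals \<Delta> E"
    and nef: "nef_partition \<Delta> E r D"
begin

lemma Delta_polytope: "lattice_polytope \<Delta>"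
  using reflexive[unfolded reflexive_with_normals_def] by (elim conjE)

lemma Delta_dim: "aff_dim \<Delta> = int CARD('d)"
  using reflexive[unfolded reflexive_with_normals_def] by (elim conjE)

lemma finite_normals: "finite E"
  using reflexive[unfolded reflexive_with_normals_def] by (elim conjE)

lemma facet_normal: "e \<in> E \<Longrightarrow> {x \<in> \<Delta>. x \<bullet> e = -1} facet_of \<Delta>"
  using reflexive[unfolded reflexive_with_normals_def] by (elim conjE) blast

lemma Delta_eq: "\<Delta> = {x. \<forall>e\<in>E. -1 \<le> x \<bullet> e}"
  using reflexive[unfolded reflexive_with_normals_def] by (elim conjE)

lemma Delta_eq_minkowski_sum: "\<Delta> = minkowski_sum r D"
  using nef[unfolded nef_partition_def] by (elim conjE)

lemma summand_polytope: "j < r \<Longrightarrow> lattice_polytope (D j)"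
  using nef unfolding nef_partition_def by blast

lemma supp_phi_normal_01: "j < r \<Longrightarrow> e \<in> E \<Longrightarrow> supp_phi (D j) e \<in> {0, 1}"
  using nef unfolding nef_partition_def by blast

lemma bounded_Delta: "bounded \<Delta>"
proof -
  obtain V where "finite V" "\<Delta> = convex hull V"
    using Delta_polytope unfolding lattice_polytope_def by blast
  then show ?thesis
    by (simp add: compact_imp_bounded compact_convex_hull finite_imp_compact)
qed

lemma Delta_nonempty: "\<Delta> \<noteq> {}"
proof
  assume "\<Delta> = {}"
  then show False
    using Delta_dim by simp
qed

lemma summand_nonempty: "j < r \<Longrightarrow> D j \<noteq> {}"
proof -
  assume "j < r"
  obtain x where "x \<in> minkowski_sum r D"
    using Delta_nonempty Delta_eq_minkowski_sum by blast
  then obtain f where "\<forall>j<r. f j \<in> D j"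
    unfolding mem_minkowski_sum by blast
  then show ?thesis
    using \<open>j < r\<close> by blast
qed

lemma supp_phi_Delta: "supp_phi \<Delta> y = (\<Sum>j<r. supp_phi (D j) y)"
  unfolding Delta_eq_minkowski_sum
  by (rule supp_phi_minkowski_sum) (simp_all add: summand_polytope summand_nonempty)

lemma supp_phi_Delta_normal:
  assumes "e \<in> E"
  shows "supp_phi \<Delta> e = 1"
proof -
  obtain x where x: "x \<in> \<Delta>" "x \<bullet> e = -1"
    using facet_normal[OF assms] unfolding facet_of_def by blast
  then have "1 \<le> supp_phi \<Delta> e"
    using supp_phi_le_inner[OF Delta_polytope x(1), of e] by linarith
  moreover obtain x' where "x' \<in> \<Delta>" "x' \<bullet> e = - supp_phi \<Delta> e"
    using supp_phi_attained[OF Delta_polytope Delta_nonempty] by blast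
  then have "- supp_phi \<Delta> e \<ge> -1"
    using assms unfolding Delta_eq by auto
  ultimately show ?thesis
    by simp
qed

lemma zero_in_convex_hull_normals: "0 \<in> convex hull E"
  using finite_normals bounded_Delta unfolding Delta_eq by (rule bounded_polyhedron_imp_zero_in_convex_hull)

lemma minimizer_direction_in_normal_cone:
  assumes "z \<in> \<Delta>" "z \<bullet> y = - supp_phi \<Delta> y"
  shows "y \<in> convex_cone hull {e \<in> E. z \<bullet> e = -1}"
proof (rule minimized_direction_in_active_cone[OF finite_normals])
  show "\<forall>e\<in>E. -1 \<le> z \<bullet> e"
    using assms(1) unfolding Delta_eq by simp
  show "z \<bullet> y \<le> x \<bullet> y" if "\<forall>e\<in>E. -1 \<le> x \<bullet> e" for x
  proof -
    have "x \<in> \<Delta>"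
      using that unfolding Delta_eq by simp
    then show ?thesis
      using supp_phi_le_inner[OF Delta_polytope, of x y] assms(2) by simp
  qed
qed

lemma supp_phi_linear_on_normal_cone:
  obtains T \<mu> where "T \<subseteq> E" "\<forall>e\<in>T. 0 < \<mu> e" "y = (\<Sum>e\<in>T. \<mu> e *\<^sub>R e)"
    "\<forall>j<r. supp_phi (D j) y = (\<Sum>e\<in>T. \<mu> e * supp_phi (D j) e)"
proof -
  obtain z where z: "z \<in> \<Delta>" "z \<bullet> y = - supp_phi \<Delta> y"
    using supp_phi_attained[OF Delta_polytope Delta_nonempty] by blast
  define A where "A = {e \<in> E. z \<bullet> e = -1}"
  have "finite A"
    unfolding A_def using finite_normals by simp
  have "y \<in> convex_cone hull A"
    unfolding A_def using z by (rule minimizer_direction_in_normal_cone)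
  then obtain \<mu> where \<mu>: "\<forall>e\<in>A. 0 \<le> \<mu> e" "y = (\<Sum>e\<in>A. \<mu> e *\<^sub>R e)"
    using convex_cone_hull_finite_sumE[OF \<open>finite A\<close>] by blast
  obtain f where f: "\<forall>j<r. f j \<in> D j" "z = (\<Sum>j<r. f j)"
    using z(1) unfolding Delta_eq_minkowski_sum mem_minkowski_sum by blast
  have tight: "f j \<bullet> w = - supp_phi (D j) w" if "j < r" "z \<bullet> w = - supp_phi \<Delta> w" for j w
  proof (rule minkowski_sum_minimizer_summands[where D = D])
    show "(\<Sum>j<r. f j) \<bullet> w = - (\<Sum>j<r. supp_phi (D j) w)"
      using that(2) f(2) supp_phi_Delta by simp
  qed (use summand_polytope f(1) that(1) in auto)
  have lin: "supp_phi (D j) y = (\<Sum>e\<in>A. \<mu> e * supp_phi (D j) e)" if "j < r" for j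
  proof -
    have "supp_phi (D j) y = - (f j \<bullet> y)"
      using tight[OF that z(2)] by simp
    also have "\<dots> = - (\<Sum>e\<in>A. \<mu> e * (f j \<bullet> e))"
      by (subst \<mu>(2)) (simp add: inner_sum_right)
    also have "\<dots> = - (\<Sum>e\<in>A. \<mu> e * - supp_phi (D j) e)"
      using tight[OF that] supp_phi_Delta_normal unfolding A_def
      by (intro arg_cong[where f = uminus] sum.cong) auto
    finally show ?thesis
      by (simp add: sum_negf)
  qed
  define T where "T = {e \<in> A. \<mu> e \<noteq> 0}"
  have "y = (\<Sum>e\<in>T. \<mu> e *\<^sub>R e)"
    unfolding \<mu>(2) T_def by (rule sum.mono_neutral_right) (use \<open>finite A\<close> in auto)
  moreover have "supp_phi (D j) y = (\<Sum>e\<in>T. \<mu> e * supp_phi (D j) e)" if "j < r" for j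
    unfolding lin[OF that] T_def by (rule sum.mono_neutral_right) (use \<open>finite A\<close> in auto)
  moreover have "T \<subseteq> E" "\<forall>e\<in>T. 0 < \<mu> e"
    using \<mu>(1) unfolding T_def A_def by auto
  ultimately show thesis
    using that by blast
qed

lemma supp_phi_summand_nonneg:
  assumes "j < r"
  shows "0 \<le> supp_phi (D j) y"
proof -
  obtain T \<mu> where T: "T \<subseteq> E" "\<forall>e\<in>T. 0 < \<mu> e"
    "\<forall>j<r. supp_phi (D j) y = (\<Sum>e\<in>T. \<mu> e * supp_phi (D j) e)"
    using supp_phi_linear_on_normal_cone by metis
  have "0 \<le> supp_phi (D j) e" if "e \<in> T" for e
    using supp_phi_normal_01[OF assms, of e] T(1) that by fastforce
  then show ?thesis
    using T(2,3) assms by (auto intro!: sum_nonneg)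
qed

lemma supp_phi_Delta_le_one:
  assumes "y \<in> convex hull E"
  shows "supp_phi \<Delta> y \<le> 1"
proof -
  obtain z where z: "z \<in> \<Delta>" "z \<bullet> y = - supp_phi \<Delta> y"
    using supp_phi_attained[OF Delta_polytope Delta_nonempty] by blast
  have "E \<subseteq> {w. -1 \<le> z \<bullet> w}"
    using z(1) unfolding Delta_eq by auto
  then have "convex hull E \<subseteq> {w. -1 \<le> z \<bullet> w}"
    by (intro hull_minimal convex_halfspace_ge)
  then show ?thesis
    using assms z(2) by auto
qed

lemma supp_phi_Delta_pos:
  assumes "y \<noteq> 0"
  shows "0 < supp_phi \<Delta> y"
proof (rule ccontr)
  assume "\<not> 0 < supp_phi \<Delta> y"
  then have "0 \<le> x \<bullet> y" if "\<forall>e\<in>E. -1 \<le> x \<bullet> e" for x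
    using that supp_phi_le_inner[OF Delta_polytope, of x y] unfolding Delta_eq by auto
  then show False
    using nonneg_on_polyhedron_imp_zero[OF finite_normals] assms by blast
qed

lemma supp_phi_normal_other_zero:
  assumes "e \<in> E" "j < r" "i < r" "i \<noteq> j" "supp_phi (D j) e = 1"
  shows "supp_phi (D i) e = 0"
proof -
  have "supp_phi (D i) e + supp_phi (D j) e \<le> supp_phi \<Delta> e"
    unfolding supp_phi_Delta using assms supp_phi_summand_nonneg
    by (intro sum_nonneg_two_le) auto
  then show ?thesis
    using assms supp_phi_Delta_normal supp_phi_summand_nonneg[of i e] by simp
qed

lemma lattice_point_supp_phi_single:
  assumes "y \<in> convex hull E" "lattice_point y" "y \<noteq> 0"
  obtains j where "j < r" "supp_phi (D j) y = 1" "\<forall>i<r. i \<noteq> j \<longrightarrow> supp_phi (D i) y = 0"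
proof -
  have sum_pos: "0 < (\<Sum>i<r. supp_phi (D i) y)" and sum_le: "(\<Sum>i<r. supp_phi (D i) y) \<le> 1"
    using supp_phi_Delta_pos[OF assms(3)] supp_phi_Delta_le_one[OF assms(1)]
    by (simp_all add: supp_phi_Delta)
  have "\<exists>j<r. supp_phi (D j) y \<noteq> 0"
  proof (rule ccontr)
    assume "\<not> (\<exists>j<r. supp_phi (D j) y \<noteq> 0)"
    then have "(\<Sum>i<r. supp_phi (D i) y) = 0"
      by simp
    then show False
      using sum_pos by simp
  qed
  then obtain j where j: "j < r" "supp_phi (D j) y \<noteq> 0"
    by blast
  obtain k where k: "supp_phi (D j) y = of_int k"
    using supp_phi_Ints[OF summand_polytope[OF j(1)] summand_nonempty[OF j(1)] assms(2)]
    by (auto elim: Ints_cases)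
  then have "1 \<le> supp_phi (D j) y"
    using j supp_phi_summand_nonneg[OF j(1), of y] by simp
  have other: "supp_phi (D i) y = 0" if "i < r" "i \<noteq> j" for i
  proof -
    have "supp_phi (D i) y + supp_phi (D j) y \<le> (\<Sum>i<r. supp_phi (D i) y)"
      using that j(1) supp_phi_summand_nonneg by (intro sum_nonneg_two_le) auto
    then show ?thesis
      using sum_le \<open>1 \<le> supp_phi (D j) y\<close> supp_phi_summand_nonneg[OF that(1), of y] by linarith
  qed
  have "supp_phi (D j) y \<le> (\<Sum>i<r. supp_phi (D i) y)"
    using j(1) supp_phi_summand_nonneg by (intro member_le_sum) auto
  then have "supp_phi (D j) y = 1"
    using sum_le \<open>1 \<le> supp_phi (D j) y\<close> by linarith
  moreover have "\<forall>i<r. i \<noteq> j \<longrightarrow> supp_phi (D i) y = 0"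
    using other by blast
  ultimately show thesis
    by (rule that[OF j(1)])
qed

lemma supp_phi_normal_eq_one_on_support:
  assumes T: "T \<subseteq> E" "\<forall>e\<in>T. 0 < \<mu> e"
    and lin: "\<forall>i<r. supp_phi (D i) y = (\<Sum>e\<in>T. \<mu> e * supp_phi (D i) e)"
    and j: "j < r" "\<forall>i<r. i \<noteq> j \<longrightarrow> supp_phi (D i) y = 0"
    and "e \<in> T"
  shows "supp_phi (D j) e = 1"
proof -
  have "finite T"
    using T(1) finite_normals finite_subset by blast
  have zero: "supp_phi (D i) e = 0" if "i < r" "i \<noteq> j" for i
  proof -
    have "(\<Sum>e\<in>T. \<mu> e * supp_phi (D i) e) = 0"
      using lin j(2) that by simp
    moreover have "0 \<le> \<mu> e * supp_phi (D i) e" if "e \<in> T" for e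
      using T that \<open>i < r\<close> supp_phi_summand_nonneg by (simp add: less_imp_le)
    ultimately have "\<forall>e\<in>T. \<mu> e * supp_phi (D i) e = 0"
      using \<open>finite T\<close> by (subst (asm) sum_nonneg_eq_0_iff) auto
    then show ?thesis
      using T(2) \<open>e \<in> T\<close> by fastforce
  qed
  have "1 = (\<Sum>i<r. supp_phi (D i) e)"
    using supp_phi_Delta_normal[of e] T(1) \<open>e \<in> T\<close> by (auto simp: supp_phi_Delta)
  also have "\<dots> = supp_phi (D j) e + (\<Sum>i\<in>{..<r} - {j}. supp_phi (D i) e)"
    using j(1) by (intro sum.remove) auto
  also have "(\<Sum>i\<in>{..<r} - {j}. supp_phi (D i) e) = 0"
    using zero by (intro sum.neutral) auto
  finally show ?thesis
    by simp
qed

lemma lattice_point_in_dual_nef_part: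
  assumes "y \<in> convex hull E" "lattice_point y" "y \<noteq> 0"
  obtains j where "j < r" "y \<in> dual_nef_part E (D j)"
proof -
  obtain j where j: "j < r" "supp_phi (D j) y = 1" "\<forall>i<r. i \<noteq> j \<longrightarrow> supp_phi (D i) y = 0"
    by (rule lattice_point_supp_phi_single[OF assms])
  obtain T \<mu> where T: "T \<subseteq> E" "\<forall>e\<in>T. 0 < \<mu> e" "y = (\<Sum>e\<in>T. \<mu> e *\<^sub>R e)"
    and lin: "\<forall>i<r. supp_phi (D i) y = (\<Sum>e\<in>T. \<mu> e * supp_phi (D i) e)"
    by (rule supp_phi_linear_on_normal_cone)
  have one: "supp_phi (D j) e = 1" if "e \<in> T" for e
    using supp_phi_normal_eq_one_on_support[OF T(1,2) lin j(1,3) that] .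
  have "finite T"
    using T(1) finite_normals finite_subset by blast
  have "y \<in> convex hull T"
    unfolding convex_hull_finite[OF \<open>finite T\<close>]
  proof (intro CollectI exI conjI)
    show "\<forall>e\<in>T. 0 \<le> \<mu> e"
      using T(2) by (simp add: less_imp_le)
    show "sum \<mu> T = 1"
      using lin j one by simp
  qed (use T(3) in simp)
  moreover have "convex hull T \<subseteq> dual_nef_part E (D j)"
    unfolding dual_nef_part_def using T(1) one by (intro hull_mono) auto
  ultimately show thesis
    using that j(1) by blast
qed

lemma zero_in_dual_nef_part: "0 \<in> dual_nef_part E (D j)"
  unfolding dual_nef_part_def by (simp add: hull_inc)

lemma dual_nef_part_subset: "dual_nef_part E (D j) \<subseteq> convex hull E"
  unfolding dual_nef_part_def
  using zero_in_convex_hull_normals by (intro hull_minimal) (auto simp: hull_inc)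

lemma inner_nonneg_dual_nef_part:
  assumes "k < r" "l < r" "l \<noteq> k" "z \<in> dual_nef_part E (D k)" "x \<in> D l"
  shows "0 \<le> x \<bullet> z"
proof -
  have "0 \<le> x \<bullet> e" if "e \<in> E" "supp_phi (D k) e = 1" for e
  proof -
    have "supp_phi (D l) e = 0"
      using supp_phi_normal_other_zero that assms(1-3) by blast
    then show ?thesis
      using supp_phi_le_inner[OF summand_polytope[OF assms(2)] assms(5), of e] by simp
  qed
  then have "insert 0 {e \<in> E. supp_phi (D k) e = 1} \<subseteq> {z. x \<bullet> z \<ge> 0}"
    by auto
  then have "dual_nef_part E (D k) \<subseteq> {z. x \<bullet> z \<ge> 0}"
    unfolding dual_nef_part_def by (intro hull_minimal convex_halfspace_ge)
  then show ?thesis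
    using assms(4) by blast
qed

lemma dual_nef_part_inter:
  assumes "i < r" "j < r" "i \<noteq> j"
  shows "dual_nef_part E (D i) \<inter> dual_nef_part E (D j) = {0}"
proof
  show "dual_nef_part E (D i) \<inter> dual_nef_part E (D j) \<subseteq> {0}"
  proof
    fix y assume y: "y \<in> dual_nef_part E (D i) \<inter> dual_nef_part E (D j)"
    have "0 \<le> x \<bullet> y" if x: "\<forall>e\<in>E. -1 \<le> x \<bullet> e" for x
    proof -
      have "x \<in> \<Delta>"
        using x unfolding Delta_eq by simp
      then obtain f where f: "\<forall>l<r. f l \<in> D l" "x = (\<Sum>l<r. f l)"
        unfolding Delta_eq_minkowski_sum mem_minkowski_sum by blast
      have "0 \<le> f l \<bullet> y" if "l < r" for l
        using inner_nonneg_dual_nef_part[of i l y "f l"] inner_nonneg_dual_nef_part[of j l y "f l"]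
          assms y f(1) that by (cases "l = i") auto
      then show ?thesis
        unfolding f(2) inner_sum_left by (intro sum_nonneg) auto
    qed
    then show "y \<in> {0}"
      using nonneg_on_polyhedron_imp_zero[OF finite_normals] by blast
  qed
  show "{0} \<subseteq> dual_nef_part E (D i) \<inter> dual_nef_part E (D j)"
    using zero_in_dual_nef_part by blast
qed

end

theorem mainTheorem11:
  fixes \<Delta> E :: "(real ^ 'd) set" and r :: nat and D :: "nat \<Rightarrow> (real ^ 'd) set"
  assumes "reflexive_with_normals \<Delta> E"
    and "nef_partition \<Delta> E r D"
  shows "int (lpts (convex hull E)) =
           (\<Sum>j<r. int (lpts (dual_nef_part E (D j)))) - int r + 1"
proof -
  interpret reflexive_nef_partition \<Delta> E r D
    using assms by unfold_locales
  let ?L = "\<lambda>S. {x \<in> S. lattice_point x}"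
  have "finite (?L (convex hull E))"
    using finite_normals
    by (intro finite_lattice_points) (simp add: compact_imp_bounded compact_convex_hull finite_imp_compact)
  then have finite: "finite (?L (dual_nef_part E (D j)))" for j
    by (rule rev_finite_subset) (use dual_nef_part_subset in blast)
  have "?L (convex hull E) = insert 0 (\<Union>j\<in>{..<r}. ?L (dual_nef_part E (D j)))"
    using lattice_point_in_dual_nef_part dual_nef_part_subset zero_in_convex_hull_normals
    by auto (metis lessThan_iff)
  moreover have "int (card (insert 0 (\<Union>j\<in>{..<r}. ?L (dual_nef_part E (D j))))) =
      (\<Sum>j<r. int (card (?L (dual_nef_part E (D j))))) - int (card {..<r}) + 1"
  proof (rule card_insert_UN_pointed)
    show "?L (dual_nef_part E (D i)) \<inter> ?L (dual_nef_part E (D j)) \<subseteq> {0}"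
      if "i \<in> {..<r}" "j \<in> {..<r}" "i \<noteq> j" for i j
      using dual_nef_part_inter[of i j] that by auto
  qed (use finite zero_in_dual_nef_part in auto)
  ultimately show ?thesis
    unfolding lpts_def by simp
qed

end
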